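(* Let $\mu\in\mathcal M_{a,b,KN^{-1}}(\mathbb T^N)$ be a probability measure and $B(k)$ as defined below. For every $k\in[1,N]$, distinct indices $i_1,\dots,i_k\in[1,N]$, $j\in[1,k-1]$, points $x_{i_1},\dots,x_{i_{k-1}},x'_{i_j}\in\mathbb T$, and $\psi:\mathbb T\to\mathbb R$ with $\mathrm{Osc}\,\psi<\infty$, $$\int_{\mathbb T}\psi\,d\Pi_{i_k}\big[\mu_{(x_{i_1},\dots,x_{i_j},\dots,x_{i_{k-1}})}-\mu_{(x_{i_1},\dots,x'_{i_j},\dots,x_{i_{k-1}})}\big]\le B(N-1)\,[1+2B(k)]\,\mathrm{Osc}\,\psi .$$
   Context: $\mathbb T=\mathbb R/\mathbb Z$. $\mu\in\mathcal M_{a,b,L}$ means: $\mu$ has density $\rho\in C^2(\mathbb T^N,(0,\infty))$, and for every $i$ the conditional densities $\rho_{\hat{\boldsymbol x}_i}(x)=\rho(x;\hat{\boldsymbol x}_i)/\int\rho(s;\hat{\boldsymbol x}_i)ds$ lie in $\mathcal V_a:=\{\psi\in C^2(\mathbb T,(0,\infty)):|(\log\psi)'|<a\}$ and satisfy $\theta_b(\rho_{\hat{\boldsymbol x}_i},\rho_{\hat{\boldsymbol x}'_i})\le L|x_j-x'_j|$ when $\hat{\boldsymbol x}_i,\hat{\boldsymbol x}'_i$ differ only in coordinate $j$, where $\theta_b(\psi_1,\psi_2)=\log\beta_b(\psi_1,\psi_2)+\log\beta_b(\psi_2,\psi_1)$, $\beta_b(\psi_1,\psi_2)=\inf\{t>0:t\psi_1-\psi_2\in\mathcal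 V_b\}$. $\mu_{(x_{i_1},\dots,x_{i_m})}$ is the conditional probability measure of $\mu$ on the torus of the remaining coordinates when coordinates $i_1,\dots,i_m$ are fixed; $\Pi_{i_k}$ is the marginal on coordinate $i_k$. $\mathrm{Osc}_j\psi:=\sup\{|\psi(x_j;\hat{\boldsymbol x}_j)-\psi(x'_j;\hat{\boldsymbol x}_j)|\}$, $\mathrm{Osc}\,\psi:=\max_j\mathrm{Osc}_j\psi$, $\mathcal O_\alpha(\mathbb T^m):=\{\psi\in L^1:\mathrm{Osc}_j\psi\le\alpha\ \forall j\}$. $B(k):=\sup\int_{\mathbb T^{N-k}}\psi\,d[\mu_{(x_{i_1},\dots,x_{i_j},\dots,x_{i_k})}-\mu_{(x_{i_1},\dots,x'_{i_j},\dots,x_{i_k})}]$ over $j\in[1,k]$, $\psi\in\mathcal O_1(\mathbb T^{N-k})$, distinct $i_1,\dots,i_k$ and points $x_{i_1},\dots,x_{i_k},x'_{i_j}\in\mathbb T$. *)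

theory Defs
  imports "HOL-Probability.Probability"
begin

section \<open>The circle T = R/Z, represented by the fundamental domain [0,1)\<close>

definition Tset :: "real set" where
  "Tset = {0..<1}"

definition Tm :: "real measure" where
  "Tm = restrict_space lborel Tset"

definition torus :: "'n set \<Rightarrow> ('n \<Rightarrow> real) measure" where
  "torus J = PiM J (\<lambda>_. Tm)"

definition C2_real :: "(real \<Rightarrow> real) \<Rightarrow> bool" where
  "C2_real f \<longleftrightarrow> (\<exists>f' f''. (\<forall>x. (f has_real_derivative f' x) (at x)) \<and>
       (\<forall>x. (f' has_real_derivative f'' x) (at x)) \<and> continuous_on UNIV f'')"

definition C2_vec :: "(real^'n \<Rightarrow> real) \<Rightarrow> bool" where
  "C2_vec f \<longleftrightarrow> (\<exists>(D1 :: real^'n \<Rightarrow> ((real^'n) \<Rightarrow>\<^sub>L real))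
                    (D2 :: real^'n \<Rightarrow> ((real^'n) \<Rightarrow>\<^sub>L ((real^'n) \<Rightarrow>\<^sub>L real))).
       (\<forall>x. (f has_derivative blinfun_apply (D1 x)) (at x)) \<and>
       (\<forall>x. (D1 has_derivative blinfun_apply (D2 x)) (at x)) \<and>
       continuous_on UNIV D2)"

text \<open>V_a = {psi in C^2(T,(0,oo)) : |(log psi)'| < a}; functions on T are 1-periodic functions on R.\<close>
definition V :: "real \<Rightarrow> (real \<Rightarrow> real) set" where
  "V a = {\<psi>. (\<forall>s. \<psi> (s + 1) = \<psi> s) \<and> (\<forall>s. \<psi> s > 0) \<and> C2_real \<psi> \<and>
             (\<forall>s. \<bar>deriv (\<lambda>u. ln (\<psi> u)) s\<bar> < a)}"

text \<open>beta_b(psi1,psi2) = inf{t>0 : t psi1 - psi2 in V_b} (inf of the empty set = +oo).\<close>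
definition beta :: "real \<Rightarrow> (real \<Rightarrow> real) \<Rightarrow> (real \<Rightarrow> real) \<Rightarrow> ereal" where
  "beta b \<psi>1 \<psi>2 = Inf {ereal t | t. t > 0 \<and> (\<lambda>s. t * \<psi>1 s - \<psi>2 s) \<in> V b}"

definition theta :: "real \<Rightarrow> (real \<Rightarrow> real) \<Rightarrow> (real \<Rightarrow> real) \<Rightarrow> ereal" where
  "theta b \<psi>1 \<psi>2 =
     (case (beta b \<psi>1 \<psi>2, beta b \<psi>2 \<psi>1) of
        (ereal u, ereal v) \<Rightarrow> (if u > 0 \<and> v > 0 then ereal (ln u + ln v) else \<infinity>)
      | _ \<Rightarrow> \<infinity>)"

definition vupd :: "real^'n \<Rightarrow> 'n \<Rightarrow> real \<Rightarrow> real^'n" where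
  "vupd x i s = (\<chi> k. if k = i then s else x $ k)"

definition cdens :: "(real^'n \<Rightarrow> real) \<Rightarrow> 'n \<Rightarrow> real^'n \<Rightarrow> real \<Rightarrow> real" where
  "cdens \<rho> i x = (\<lambda>s. \<rho> (vupd x i s) / integral {0..1} (\<lambda>u. \<rho> (vupd x i u)))"

definition in_torus :: "real^'n \<Rightarrow> bool" where
  "in_torus x \<longleftrightarrow> (\<forall>k. x $ k \<in> Tset)"

text \<open>mu in M_{a,b,L} with density rho (rho is a positive C^2 function on T^N,
  i.e. a positive, 1-periodic in each coordinate, C^2 function on R^N).\<close>
definition in_M :: "real \<Rightarrow> real \<Rightarrow> real \<Rightarrow> ('n::finite \<Rightarrow> real) measure \<Rightarrow> (real^'n \<Rightarrow> real) \<Rightarrow> bool" where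
  "in_M a b L \<mu> \<rho> \<longleftrightarrow>
     \<mu> = density (torus UNIV) (\<lambda>x. ennreal (\<rho> (vec_lambda x))) \<and>
     C2_vec \<rho> \<and> (\<forall>x. \<rho> x > 0) \<and> (\<forall>x i. \<rho> (x + axis i 1) = \<rho> x) \<and>
     (\<forall>i x. in_torus x \<longrightarrow> cdens \<rho> i x \<in> V a) \<and>
     (\<forall>i j x t. j \<noteq> i \<longrightarrow> in_torus x \<longrightarrow> t \<in> Tset \<longrightarrow>
         theta b (cdens \<rho> i x) (cdens \<rho> i (vupd x j t)) \<le> ereal (L * \<bar>x $ j - t\<bar>))"

definition merge_pt :: "'n set \<Rightarrow> ('n \<Rightarrow> real) \<Rightarrow> ('n \<Rightarrow> real) \<Rightarrow> real^'n" where
  "merge_pt F x y = (\<chi> i. if i \<in> F then x i else y i)"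

definition cond_meas :: "(real^'n \<Rightarrow> real) \<Rightarrow> 'n set \<Rightarrow> ('n \<Rightarrow> real) \<Rightarrow> ('n \<Rightarrow> real) measure" where
  "cond_meas \<rho> F x =
     density (torus (UNIV - F))
       (\<lambda>y. ennreal (\<rho> (merge_pt F x y) /
                     integral\<^sup>L (torus (UNIV - F)) (\<lambda>z. \<rho> (merge_pt F x z))))"

definition marginal :: "'n \<Rightarrow> ('n \<Rightarrow> real) measure \<Rightarrow> real measure" where
  "marginal i M = distr M Tm (\<lambda>y. y i)"

definition Osc_j :: "'n set \<Rightarrow> 'n \<Rightarrow> (('n \<Rightarrow> real) \<Rightarrow> real) \<Rightarrow> ereal" where
  "Osc_j J l \<psi> = (SUP (y, s) \<in> space (torus J) \<times> Tset. ereal \<bar>\<psi> y - \<psi> (y(l := s))\<bar>)"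

definition O_class :: "real \<Rightarrow> 'n set \<Rightarrow> (('n \<Rightarrow> real) \<Rightarrow> real) set" where
  "O_class \<alpha> J = {\<psi>. integrable (torus J) \<psi> \<and> (\<forall>l\<in>J. Osc_j J l \<psi> \<le> ereal \<alpha>)}"

definition Osc1 :: "(real \<Rightarrow> real) \<Rightarrow> ereal" where
  "Osc1 \<psi> = (SUP (s, s') \<in> Tset \<times> Tset. ereal \<bar>\<psi> s - \<psi> s'\<bar>)"

text \<open>B(k), for mu with density rho; the list is = [i_1,...,i_k] (0-based positions),
  x gives the fixed values x_{i_1},...,x_{i_k}, and coordinate is!j is replaced by t.\<close>
definition Bk :: "(real^'n::finite \<Rightarrow> real) \<Rightarrow> nat \<Rightarrow> ereal" where
  "Bk \<rho> k = (SUP (is, j, x, t, \<psi>) \<in>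
       {(is, j, x, t, \<psi>). length is = k \<and> distinct is \<and> j < k \<and>
          (\<forall>i\<in>set is. x i \<in> Tset) \<and> t \<in> Tset \<and> \<psi> \<in> O_class 1 (UNIV - set is)}.
       ereal (integral\<^sup>L (cond_meas \<rho> (set is) x) \<psi>
              - integral\<^sup>L (cond_meas \<rho> (set is) (x(is ! j := t))) \<psi>))"

end

theory Submission
  imports Defs
begin

text \<open>Let \<open>m = i\<^sub>k\<close>, let \<open>\<mu>\<^sub>w\<close> be \<open>\<mu>\<close> conditioned on the coordinates \<open>i\<^sub>1, \<dots>, i\<^sub>k\<^sub>-\<^sub>1\<close> being \<open>w\<close>,
  and \<open>x'\<close> the point \<open>x\<close> with \<open>x\<^sub>i\<^sub>j\<close> replaced by \<open>x'\<^sub>i\<^sub>j\<close>. Let \<open>g\<^sub>w\<close> be the conditional expectation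
  of \<open>\<psi>(y\<^sub>m)\<close> given all coordinates but \<open>m\<close>, and \<open>G\<^sub>w(s)\<close> that of \<open>g\<^sub>w\<close> given \<open>i\<^sub>1, \<dots>, i\<^sub>k\<close>
  with \<open>y\<^sub>m = s\<close>; by the tower property \<open>\<integral>\<psi> d\<Pi>\<^sub>m\<mu>\<^sub>w = \<integral>G\<^sub>w d\<Pi>\<^sub>m\<mu>\<^sub>w\<close>. Moving one conditioned
  coordinate changes \<open>g\<close> by at most \<open>B(N-1) Osc \<psi>\<close>, so \<open>g\<^sub>w\<close> has oscillation \<open>B(N-1) Osc \<psi>\<close> in
  every free coordinate. Hence \<open>G\<^sub>x\<close> oscillates by at most \<open>B(k) B(N-1) Osc \<psi>\<close> in \<open>s\<close>, and
  \<open>G\<^sub>x - G\<^sub>x\<^sub>' \<le> (1 + B(k)) B(N-1) Osc \<psi>\<close> pointwise. Passing from \<open>\<integral>G\<^sub>x d\<Pi>\<^sub>m\<mu>\<^sub>x\<close> to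
  \<open>\<integral>G\<^sub>x\<^sub>' d\<Pi>\<^sub>m\<mu>\<^sub>x\<^sub>'\<close> through \<open>\<integral>G\<^sub>x d\<Pi>\<^sub>m\<mu>\<^sub>x\<^sub>'\<close> costs the sum of these two bounds.\<close>

lemma space_Tm [simp]: "space Tm = Tset"
  by (simp add: Tm_def Tset_def)

lemma prob_space_Tm: "prob_space Tm"
  unfolding Tm_def by (intro prob_space_restrict_space) (auto simp: Tset_def)

lemma product_sigma_finite_Tm: "product_sigma_finite (\<lambda>_::'n. Tm)"
  by (simp add: product_sigma_finite_def prob_space_Tm prob_space_imp_sigma_finite)

lemma prob_space_torus: "prob_space (torus J)"
  unfolding torus_def by (rule prob_space_PiM) (rule prob_space_Tm)

lemma space_torus: "space (torus J) = PiE J (\<lambda>_. Tset)"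
  by (simp add: torus_def space_PiM)

lemma fun_upd_in_space_torus:
  "y \<in> space (torus J) \<Longrightarrow> l \<in> J \<Longrightarrow> s \<in> Tset \<Longrightarrow> y(l := s) \<in> space (torus J)"
  by (auto simp: space_torus PiE_def extensional_def Pi_def)

lemma borel_measurable_Tm_id: "(\<lambda>s. s) \<in> borel_measurable Tm"
  unfolding Tm_def by (rule measurable_restrict_space1) simp

lemma measurable_torus_component: "i \<in> J \<Longrightarrow> (\<lambda>y. y i) \<in> measurable (torus J) Tm"
  unfolding torus_def by (rule measurable_component_singleton)

lemma borel_measurable_torus_component: "i \<in> J \<Longrightarrow> (\<lambda>y. y i) \<in> borel_measurable (torus J)"
  using measurable_comp[OF measurable_torus_component borel_measurable_Tm_id] by (simp add: o_def)

lemma borel_measurable_vec_components: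
  fixes f :: "'a \<Rightarrow> real^'n"
  assumes "\<And>i. (\<lambda>y. f y $ i) \<in> borel_measurable M"
  shows "f \<in> borel_measurable M"
proof (rule borel_measurable_euclidean_space[THEN iffD2], rule ballI)
  fix b :: "real^'n" assume "b \<in> Basis"
  then obtain i where "b = axis i 1" by (auto simp: Basis_vec_def)
  then have "(\<lambda>x. f x \<bullet> b) = (\<lambda>x. f x $ i)" by (simp add: inner_axis)
  then show "(\<lambda>x. f x \<bullet> b) \<in> borel_measurable M" using assms by simp
qed

lemma borel_measurable_merge_pt: "merge_pt F w \<in> borel_measurable (torus (UNIV - F))"
proof (rule borel_measurable_vec_components)
  fix i show "(\<lambda>y. merge_pt F w y $ i) \<in> borel_measurable (torus (UNIV - F))"
    by (cases "i \<in> F") (simp_all add: merge_pt_def borel_measurable_torus_component)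
qed

section \<open>Expectations bounded by oscillations\<close>

lemma (in prob_space) integrable_if_bounded:
  "f \<in> borel_measurable M \<Longrightarrow> (\<And>x. x \<in> space M \<Longrightarrow> \<bar>f x\<bar> \<le> B) \<Longrightarrow> integrable M f"
  for f :: "_ \<Rightarrow> real"
  by (rule integrable_const_bound[where B=B]) auto

lemma (in prob_space) abs_integral_le_bound:
  fixes f :: "_ \<Rightarrow> real"
  assumes "f \<in> borel_measurable M" "\<And>x. x \<in> space M \<Longrightarrow> \<bar>f x\<bar> \<le> B"
  shows "\<bar>integral\<^sup>L M f\<bar> \<le> B"
proof -
  have f: "integrable M f" using integrable_if_bounded assms .
  have "integral\<^sup>L M f \<le> B" by (rule integral_le_const[OF f]) (use assms(2) in fastforce)
  moreover have "- B \<le> integral\<^sup>L M f" by (rule integral_ge_const[OF f]) (use assms(2) in fastforce)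
  ultimately show ?thesis by linarith
qed

lemma (in prob_space) integral_pos_if_bounded_below:
  fixes f :: "_ \<Rightarrow> real"
  assumes "f \<in> borel_measurable M" "0 < lo" "\<And>x. x \<in> space M \<Longrightarrow> lo \<le> f x \<and> f x \<le> hi"
  shows "integral\<^sup>L M f > 0"
proof -
  have f: "integrable M f"
    by (rule integrable_if_bounded[OF assms(1), where B=hi]) (use assms(2,3) in fastforce)
  have "lo \<le> integral\<^sup>L M f" by (rule integral_ge_const[OF f]) (use assms(3) in auto)
  then show ?thesis using assms(2) by simp
qed

lemma (in prob_space) integral_diff_le_if_le_add:
  fixes f g :: "_ \<Rightarrow> real"
  assumes "integrable M f" "integrable M g" "\<And>x. x \<in> space M \<Longrightarrow> f x \<le> g x + c"
  shows "integral\<^sup>L M f - integral\<^sup>L M g \<le> c"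
proof -
  have "integral\<^sup>L M f \<le> integral\<^sup>L M (\<lambda>x. g x + c)"
    by (rule integral_mono) (use assms in auto)
  also have "\<dots> = integral\<^sup>L M g + c" using assms(2) by (simp add: prob_space)
  finally show ?thesis by simp
qed

lemma integral_diff_le_if_oscillation_le:
  fixes \<phi> :: "_ \<Rightarrow> real"
  assumes "prob_space P" "prob_space P'" "space P' = space P"
    and "\<phi> \<in> borel_measurable P" "\<phi> \<in> borel_measurable P'"
    and osc: "\<And>y y'. y \<in> space P \<Longrightarrow> y' \<in> space P \<Longrightarrow> \<phi> y - \<phi> y' \<le> C"
  shows "integral\<^sup>L P \<phi> - integral\<^sup>L P' \<phi> \<le> C"
proof -
  interpret P: prob_space P by fact
  interpret P': prob_space P' by fact
  obtain y0 where y0: "y0 \<in> space P" using P.not_empty by blast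
  have bounded: "\<bar>\<phi> y\<bar> \<le> \<bar>\<phi> y0\<bar> + \<bar>C\<bar>" if "y \<in> space P" for y
    using osc[OF that y0] osc[OF y0 that] by linarith
  have "integrable P \<phi>"
    by (rule P.integrable_if_bounded) (use assms(4) bounded in auto)
  have "integrable P' \<phi>"
    by (rule P'.integrable_if_bounded) (use assms(3,5) bounded in auto)
  have "integral\<^sup>L P \<phi> \<le> \<phi> y' + C" if "y' \<in> space P" for y'
    by (rule P.integral_le_const[OF \<open>integrable P \<phi>\<close>], rule AE_I2)
       (use osc[OF _ that] in fastforce)
  then have "integral\<^sup>L P \<phi> - C \<le> integral\<^sup>L P' \<phi>"
    by (intro P'.integral_ge_const[OF \<open>integrable P' \<phi>\<close>] AE_I2) (use assms(3) in fastforce)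
  then show ?thesis by simp
qed

lemma abs_diff_le_if_Osc_j_le:
  assumes "Osc_j J l \<psi> \<le> ereal c" "y \<in> space (torus J)" "s \<in> Tset"
  shows "\<bar>\<psi> y - \<psi> (y(l := s))\<bar> \<le> c"
proof -
  have "ereal \<bar>\<psi> y - \<psi> (y(l := s))\<bar> \<le> Osc_j J l \<psi>"
    unfolding Osc_j_def using assms(2,3) by (intro SUP_upper2[of "(y, s)"]) auto
  then show ?thesis using assms(1) by (metis ereal_less_eq(3) order_trans)
qed

lemma Osc1_finiteE:
  assumes "Osc1 \<psi> < \<infinity>"
  obtains c where "Osc1 \<psi> = ereal c" "0 \<le> c" "\<And>s s'. s \<in> Tset \<Longrightarrow> s' \<in> Tset \<Longrightarrow> \<bar>\<psi> s - \<psi> s'\<bar> \<le> c"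
proof -
  have le_Osc1: "ereal \<bar>\<psi> s - \<psi> s'\<bar> \<le> Osc1 \<psi>" if "s \<in> Tset" "s' \<in> Tset" for s s'
    unfolding Osc1_def by (rule SUP_upper2[of "(s, s')"]) (use that in auto)
  have "(0::real) \<in> Tset" by (simp add: Tset_def)
  from le_Osc1[OF this this] assms obtain c where "Osc1 \<psi> = ereal c" "0 \<le> c"
    by (cases "Osc1 \<psi>") auto
  with le_Osc1 show ?thesis by (intro that) auto
qed

lemma divide_in_O_class:
  fixes \<phi> :: "('n \<Rightarrow> real) \<Rightarrow> real"
  assumes "integrable (torus J) \<phi>" "0 < d" "c \<le> d"
    and osc: "\<And>l y s. l \<in> J \<Longrightarrow> y \<in> space (torus J) \<Longrightarrow> s \<in> Tset \<Longrightarrow> \<bar>\<phi> y - \<phi> (y(l := s))\<bar> \<le> c"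
  shows "(\<lambda>y. \<phi> y / d) \<in> O_class 1 J"
proof (unfold O_class_def, intro CollectI conjI ballI)
  show "integrable (torus J) (\<lambda>y. \<phi> y / d)" using assms(1) by simp
  fix l assume l: "l \<in> J"
  show "Osc_j J l (\<lambda>y. \<phi> y / d) \<le> ereal 1"
    unfolding Osc_j_def
  proof (rule SUP_least, clarify)
    fix y s assume "y \<in> space (torus J)" "s \<in> Tset"
    from osc[OF l this] have "\<bar>\<phi> y - \<phi> (y(l := s))\<bar> / d \<le> 1"
      using assms(2,3) by (simp add: divide_le_eq)
    then show "ereal \<bar>\<phi> y / d - \<phi> (y(l := s)) / d\<bar> \<le> ereal 1"
      using assms(2) by (simp add: diff_divide_distrib[symmetric])
  qed
qed

lemma torus_abs_diff_le_card_mult: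
  fixes \<phi> :: "('n \<Rightarrow> real) \<Rightarrow> real"
  assumes "finite J"
    and osc: "\<And>l y s. l \<in> J \<Longrightarrow> y \<in> space (torus J) \<Longrightarrow> s \<in> Tset \<Longrightarrow> \<bar>\<phi> y - \<phi> (y(l := s))\<bar> \<le> c"
    and "y \<in> space (torus J)" "y' \<in> space (torus J)"
  shows "\<bar>\<phi> y - \<phi> y'\<bar> \<le> real (card J) * c"
proof -
  have "\<bar>\<phi> y - \<phi> y'\<bar> \<le> real (card D) * c"
    if "D \<subseteq> J" "y \<in> space (torus J)" "y' \<in> space (torus J)" "\<forall>l\<in>J - D. y l = y' l" for D y y'
    using finite_subset[OF that(1) \<open>finite J\<close>] that
  proof (induction D arbitrary: y rule: finite_induct)
    case empty
    then have "y = y'" by (auto simp: space_torus PiE_def extensional_def fun_eq_iff)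
    then show ?case by simp
  next
    case (insert l D)
    have "y' l \<in> Tset" using insert by (auto simp: space_torus)
    then have y1: "y(l := y' l) \<in> space (torus J)" and "\<bar>\<phi> y - \<phi> (y(l := y' l))\<bar> \<le> c"
      using insert fun_upd_in_space_torus osc by auto
    moreover have "\<bar>\<phi> (y(l := y' l)) - \<phi> y'\<bar> \<le> real (card D) * c"
      by (rule insert.IH[OF _ y1]) (use insert in auto)
    ultimately have "\<bar>\<phi> y - \<phi> y'\<bar> \<le> c + real (card D) * c" by linarith
    then show ?case using insert by (simp add: algebra_simps)
  qed
  then show ?thesis using assms by auto
qed

section \<open>Conditional measures of a positive continuous density\<close>

locale positive_density =
  fixes \<rho> :: "real^'n::finite \<Rightarrow> real"
  assumes continuous: "continuous_on UNIV \<rho>" and positive: "\<And>x. \<rho> x > 0"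
begin

lemma borel_measurable_density [measurable]: "\<rho> \<in> borel_measurable borel"
  by (rule borel_measurable_continuous_onI[OF continuous])

lemma bounds_on_unit_cube: "\<exists>lo hi. 0 < lo \<and> (\<forall>v. (\<forall>i. v $ i \<in> Tset) \<longrightarrow> lo \<le> \<rho> v \<and> \<rho> v \<le> hi)"
proof -
  let ?K = "cbox (vec 0) (vec 1) :: (real^'n) set"
  have "(vec 0 :: real^'n) \<in> ?K" by (simp add: mem_box_cart)
  then have K: "compact ?K" "?K \<noteq> {}" by auto
  have c: "continuous_on ?K \<rho>" using continuous continuous_on_subset by blast
  obtain a where a: "a \<in> ?K" "\<forall>y\<in>?K. \<rho> a \<le> \<rho> y" using continuous_attains_inf[OF K c] by blast
  obtain b where b: "b \<in> ?K" "\<forall>y\<in>?K. \<rho> y \<le> \<rho> b" using continuous_attains_sup[OF K c] by blast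
  have "\<And>v. (\<forall>i. v $ i \<in> Tset) \<Longrightarrow> v \<in> ?K" by (auto simp: mem_box_cart Tset_def less_imp_le)
  then show ?thesis using a b positive by (intro exI[of _ "\<rho> a"] exI[of _ "\<rho> b"]) auto
qed

lemma borel_measurable_density_merge_pt [measurable]:
  "(\<lambda>y. \<rho> (merge_pt F w y)) \<in> borel_measurable (torus (UNIV - F))"
  using measurable_comp[OF borel_measurable_merge_pt borel_measurable_density] by (simp add: o_def)

lemma density_merge_pt_bounds:
  assumes "\<forall>i\<in>F. w i \<in> Tset"
  obtains lo hi where "0 < lo"
    "\<And>y. y \<in> space (torus (UNIV - F)) \<Longrightarrow> lo \<le> \<rho> (merge_pt F w y) \<and> \<rho> (merge_pt F w y) \<le> hi"
proof -
  have "\<forall>i. merge_pt F w y $ i \<in> Tset" if "y \<in> space (torus (UNIV - F))" for y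
    using assms that by (auto simp: merge_pt_def space_torus PiE_def Pi_def)
  then show ?thesis using bounds_on_unit_cube that by blast
qed

lemma integrable_density_merge_pt:
  assumes "\<forall>i\<in>F. w i \<in> Tset"
  shows "integrable (torus (UNIV - F)) (\<lambda>y. \<rho> (merge_pt F w y))"
proof -
  obtain lo hi where "0 < lo"
    "\<And>y. y \<in> space (torus (UNIV - F)) \<Longrightarrow> lo \<le> \<rho> (merge_pt F w y) \<and> \<rho> (merge_pt F w y) \<le> hi"
    using density_merge_pt_bounds[OF assms] by blast
  then show ?thesis
    by (intro prob_space.integrable_if_bounded[OF prob_space_torus, where B=hi])
       (force simp: abs_of_pos positive)+
qed

definition normalizer :: "'n set \<Rightarrow> ('n \<Rightarrow> real) \<Rightarrow> real" where
  "normalizer F w = integral\<^sup>L (torus (UNIV - F)) (\<lambda>z. \<rho> (merge_pt F w z))"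

lemma normalizer_pos:
  assumes "\<forall>i\<in>F. w i \<in> Tset"
  shows "normalizer F w > 0"
proof -
  obtain lo hi where "0 < lo"
    "\<And>y. y \<in> space (torus (UNIV - F)) \<Longrightarrow> lo \<le> \<rho> (merge_pt F w y) \<and> \<rho> (merge_pt F w y) \<le> hi"
    using density_merge_pt_bounds[OF assms] by blast
  then show ?thesis unfolding normalizer_def
    by (intro prob_space.integral_pos_if_bounded_below[OF prob_space_torus]) auto
qed

lemma cond_meas_eq: "cond_meas \<rho> F w =
    density (torus (UNIV - F)) (\<lambda>y. ennreal (\<rho> (merge_pt F w y) / normalizer F w))"
  by (simp add: cond_meas_def normalizer_def)

lemma space_cond_meas [simp]: "space (cond_meas \<rho> F w) = space (torus (UNIV - F))"
  by (simp add: cond_meas_def)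

lemma sets_cond_meas [simp, measurable_cong]: "sets (cond_meas \<rho> F w) = sets (torus (UNIV - F))"
  by (simp add: cond_meas_def)

lemma integral_cond_meas:
  assumes "\<forall>i\<in>F. w i \<in> Tset" "f \<in> borel_measurable (torus (UNIV - F))"
  shows "integral\<^sup>L (cond_meas \<rho> F w) f =
     integral\<^sup>L (torus (UNIV - F)) (\<lambda>y. \<rho> (merge_pt F w y) / normalizer F w * f y)"
  unfolding cond_meas_eq using normalizer_pos[OF assms(1)] positive
  by (subst integral_density) (auto intro!: assms less_imp_le)

lemma prob_space_cond_meas:
  assumes "\<forall>i\<in>F. w i \<in> Tset"
  shows "prob_space (cond_meas \<rho> F w)"
proof
  have Z: "normalizer F w > 0" by (rule normalizer_pos[OF assms])
  have "emeasure (cond_meas \<rho> F w) (space (cond_meas \<rho> F w)) =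
     (\<integral>\<^sup>+ y. ennreal (\<rho> (merge_pt F w y) / normalizer F w) \<partial>torus (UNIV - F))"
    unfolding cond_meas_eq using Z
    by (subst emeasure_density) (auto intro!: nn_integral_cong simp: indicator_def)
  also have "\<dots> = ennreal (integral\<^sup>L (torus (UNIV - F)) (\<lambda>y. \<rho> (merge_pt F w y) / normalizer F w))"
    using Z positive
    by (intro nn_integral_eq_integral) (auto intro!: integrable_density_merge_pt[OF assms] less_imp_le)
  also have "\<dots> = 1" using Z by (simp add: normalizer_def[symmetric])
  finally show "emeasure (cond_meas \<rho> F w) (space (cond_meas \<rho> F w)) = 1" .
qed

section \<open>The constants \<open>B(k)\<close>\<close>

lemma integral_cond_meas_diff_le_card:
  fixes \<psi> :: "('n \<Rightarrow> real) \<Rightarrow> real"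
  assumes "\<forall>i\<in>set is. x i \<in> Tset" "t \<in> Tset" and \<psi>: "\<psi> \<in> O_class 1 (UNIV - set is)"
  shows "integral\<^sup>L (cond_meas \<rho> (set is) x) \<psi>
       - integral\<^sup>L (cond_meas \<rho> (set is) (x(is ! j := t))) \<psi> \<le> real CARD('n)"
proof (rule integral_diff_le_if_oscillation_le)
  let ?J = "UNIV - set is"
  show "prob_space (cond_meas \<rho> (set is) x)" "prob_space (cond_meas \<rho> (set is) (x(is ! j := t)))"
    using assms by (auto intro!: prob_space_cond_meas)
  show "\<psi> \<in> borel_measurable (cond_meas \<rho> (set is) x)"
    "\<psi> \<in> borel_measurable (cond_meas \<rho> (set is) (x(is ! j := t)))"
    using \<psi> by (auto simp: O_class_def)
  have osc: "\<bar>\<psi> y - \<psi> (y(l := s))\<bar> \<le> 1" if "l \<in> ?J" "y \<in> space (torus ?J)" "s \<in> Tset" for l y s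
    by (rule abs_diff_le_if_Osc_j_le) (use \<psi> that in \<open>auto simp: O_class_def\<close>)
  fix y y' assume yy': "y \<in> space (cond_meas \<rho> (set is) x)" "y' \<in> space (cond_meas \<rho> (set is) x)"
  have "\<bar>\<psi> y - \<psi> y'\<bar> \<le> real (card ?J) * 1"
    by (rule torus_abs_diff_le_card_mult[OF _ osc]) (use yy' in simp_all)
  moreover have "card ?J \<le> CARD('n)" by (rule card_mono) auto
  ultimately show "\<psi> y - \<psi> y' \<le> real CARD('n)" by (smt (verit) of_nat_le_iff)
qed simp

lemma Bk_le_card: "Bk \<rho> n \<le> ereal (real CARD('n))"
  unfolding Bk_def by (rule SUP_least) (auto intro!: integral_cond_meas_diff_le_card)

lemma Bk_nonneg:
  assumes "1 \<le> n" "n \<le> CARD('n)"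
  shows "0 \<le> Bk \<rho> n"
proof -
  obtain xs :: "'n list" where xs: "set xs = UNIV" "distinct xs"
    using finite_distinct_list[of "UNIV :: 'n set"] by auto
  then have "length xs = CARD('n)" using distinct_card by fastforce
  moreover have "(\<lambda>_. 0 :: real) \<in> O_class 1 (UNIV - set (take n xs))"
    by (auto simp: O_class_def Osc_j_def intro!: SUP_least)
  ultimately have "(take n xs, 0, \<lambda>_. 0, 0, \<lambda>_. 0) \<in> {(is, j, x, t, \<psi>). length is = n \<and> distinct is \<and>
      j < n \<and> (\<forall>i\<in>set is. x i \<in> Tset) \<and> t \<in> Tset \<and> \<psi> \<in> O_class 1 (UNIV - set is)}"
    using assms xs by (auto simp: Tset_def)
  then show ?thesis unfolding Bk_def by (rule SUP_upper2) simp
qed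

definition bk :: "nat \<Rightarrow> real" where
  "bk n = real_of_ereal (Bk \<rho> n)"

lemma Bk_eq_bk:
  assumes "1 \<le> n" "n \<le> CARD('n)"
  shows "Bk \<rho> n = ereal (bk n)" "0 \<le> bk n"
  using Bk_nonneg[OF assms] Bk_le_card[of n] unfolding bk_def by (cases "Bk \<rho> n"; simp)+

text \<open>Rescaling the test function to oscillation \<open>< 1\<close>; the slack \<open>e\<close> is needed because \<open>c\<close> may be \<open>0\<close>.\<close>

lemma integral_diff_le_bk_mult:
  fixes \<phi> :: "('n \<Rightarrow> real) \<Rightarrow> real"
  assumes v: "length is = n" "distinct is" "j < n" "\<forall>i\<in>set is. x i \<in> Tset" "t \<in> Tset" "n \<le> CARD('n)"
    and "integrable (torus (UNIV - set is)) \<phi>" "0 \<le> c"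
    and osc: "\<And>l y s. l \<in> UNIV - set is \<Longrightarrow> y \<in> space (torus (UNIV - set is)) \<Longrightarrow> s \<in> Tset
       \<Longrightarrow> \<bar>\<phi> y - \<phi> (y(l := s))\<bar> \<le> c"
  shows "integral\<^sup>L (cond_meas \<rho> (set is) x) \<phi>
       - integral\<^sup>L (cond_meas \<rho> (set is) (x(is ! j := t))) \<phi> \<le> bk n * c"
proof -
  let ?J = "UNIV - set is"
  let ?D = "\<lambda>\<phi>. integral\<^sup>L (cond_meas \<rho> (set is) x) \<phi> - integral\<^sup>L (cond_meas \<rho> (set is) (x(is ! j := t))) \<phi>"
  have b: "Bk \<rho> n = ereal (bk n)" "0 \<le> bk n" using Bk_eq_bk v by auto
  have scaled: "?D \<phi> \<le> bk n * (c + e)" if "e > 0" for e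
  proof -
    have ce: "c + e > 0" using \<open>0 \<le> c\<close> that by simp
    have "(\<lambda>y. \<phi> y / (c + e)) \<in> O_class 1 ?J"
      using that by (intro divide_in_O_class[OF assms(7) ce _ osc]) simp_all
    then have "(is, j, x, t, \<lambda>y. \<phi> y / (c + e)) \<in> {(is, j, x, t, \<psi>). length is = n \<and> distinct is \<and>
        j < n \<and> (\<forall>i\<in>set is. x i \<in> Tset) \<and> t \<in> Tset \<and> \<psi> \<in> O_class 1 (UNIV - set is)}"
      using v by simp
    then have "ereal (?D (\<lambda>y. \<phi> y / (c + e))) \<le> Bk \<rho> n"
      unfolding Bk_def by (rule SUP_upper2) simp
    then have "?D \<phi> / (c + e) \<le> bk n" using b by (simp add: diff_divide_distrib)
    then show ?thesis using ce by (simp add: divide_le_eq mult.commute)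
  qed
  have "?D \<phi> \<le> bk n * c + e" if "e > 0" for e
  proof -
    have "?D \<phi> \<le> bk n * (c + e / (bk n + 1))" using scaled[of "e / (bk n + 1)"] that b by simp
    also have "\<dots> = bk n * c + e * (bk n / (bk n + 1))" using b by (simp add: algebra_simps)
    also have "\<dots> \<le> bk n * c + e * 1" using b that by (intro add_left_mono mult_left_mono) auto
    finally show ?thesis by simp
  qed
  then show ?thesis by (simp add: field_le_epsilon)
qed

end

lemma in_M_positive_density:
  fixes \<rho> :: "real^'n::finite \<Rightarrow> real"
  assumes "in_M a b L \<mu> \<rho>"
  shows "positive_density \<rho>"
proof
  from assms have "C2_vec \<rho>" by (simp add: in_M_def)
  then obtain D1 :: "real^'n \<Rightarrow> ((real^'n) \<Rightarrow>\<^sub>L real)"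
    where "\<And>x. (\<rho> has_derivative blinfun_apply (D1 x)) (at x)"
    unfolding C2_vec_def by blast
  then show "continuous_on UNIV \<rho>"
    by (intro continuous_at_imp_continuous_on ballI has_derivative_continuous)
  show "\<And>x. \<rho> x > 0" using assms by (simp add: in_M_def)
qed

context positive_density
begin

lemma integral_cond_all_but_one_diff_le:
  fixes \<psi> :: "real \<Rightarrow> real"
  assumes \<psi>: "\<psi> \<in> borel_measurable Tm" "\<And>s s'. s \<in> Tset \<Longrightarrow> s' \<in> Tset \<Longrightarrow> \<bar>\<psi> s - \<psi> s'\<bar> \<le> c"
    and z: "\<forall>i\<in>UNIV - {m}. z i \<in> Tset" and "l \<noteq> m" "s \<in> Tset"
  shows "integral\<^sup>L (cond_meas \<rho> (UNIV - {m}) z) (\<lambda>y. \<psi> (y m))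
       - integral\<^sup>L (cond_meas \<rho> (UNIV - {m}) (z(l := s))) (\<lambda>y. \<psi> (y m)) \<le> bk (CARD('n) - 1) * c"
proof -
  obtain xs :: "'n list" where xs: "set xs = UNIV" "distinct xs"
    using finite_distinct_list[of "UNIV :: 'n set"] by auto
  define L where "L = l # filter (\<lambda>i. i \<noteq> m \<and> i \<noteq> l) xs"
  have set_L: "set L = UNIV - {m}" using xs \<open>l \<noteq> m\<close> by (auto simp: L_def)
  have "distinct L" using xs by (simp add: L_def)
  then have length_L: "length L = CARD('n) - 1"
    using distinct_card[of L] set_L by (simp add: card_Diff_singleton)
  have "{l, m} \<subseteq> (UNIV :: 'n set)" by simp
  then have "2 \<le> CARD('n)" using \<open>l \<noteq> m\<close> card_mono[of UNIV "{l, m}"] by simp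
  have T0: "(0::real) \<in> Tset" by (simp add: Tset_def)
  have bounded: "\<bar>\<psi> s\<bar> \<le> \<bar>\<psi> 0\<bar> + c" if "s \<in> Tset" for s using \<psi>(2)[OF that T0] by linarith
  have "(\<lambda>y. \<psi> (y m)) \<in> borel_measurable (torus {m})"
    using measurable_comp[OF measurable_torus_component[of m "{m}"] \<psi>(1)] by (simp add: o_def)
  then have "integrable (torus {m}) (\<lambda>y. \<psi> (y m))"
    by (rule prob_space.integrable_if_bounded[OF prob_space_torus])
       (auto intro: bounded simp: space_torus)
  moreover have "UNIV - set L = {m}" using set_L by auto
  ultimately have "integral\<^sup>L (cond_meas \<rho> (set L) z) (\<lambda>y. \<psi> (y m))
       - integral\<^sup>L (cond_meas \<rho> (set L) (z(L ! 0 := s))) (\<lambda>y. \<psi> (y m)) \<le> bk (CARD('n) - 1) * c"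
    using \<psi>(2)[OF T0 T0] \<open>2 \<le> CARD('n)\<close> z set_L \<open>s \<in> Tset\<close>
    by (intro integral_diff_le_bk_mult[OF length_L \<open>distinct L\<close>])
       (auto simp: space_torus intro!: \<psi>(2))
  moreover have "L ! 0 = l" by (simp add: L_def)
  ultimately show ?thesis by (simp only: set_L)
qed

end

section \<open>Comparing the marginals on coordinate \<open>i\<^sub>k\<close>\<close>

text \<open>A point of \<open>T^(UNIV - F)\<close> is split into \<open>u \<in> T^H\<close> and its coordinate
  \<open>s\<close> at \<open>m\<close>; \<open>density_slice w u s\<close> is the density at the point assembled from \<open>w\<close> on \<open>F\<close>,
  \<open>s\<close> at \<open>m\<close> and \<open>u\<close> on \<open>H\<close>.\<close>

locale marginal_comparison = positive_density \<rho> for \<rho> :: "real^'n::finite \<Rightarrow> real" +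
  fixes k j :: nat and "is" :: "'n list" and x :: "'n \<Rightarrow> real" and t :: real
    and \<psi> :: "real \<Rightarrow> real" and c :: real
  assumes k_le_card: "k \<le> CARD('n)" and length_is: "length is = k" and distinct_is: "distinct is"
    and j_less: "j < k - 1"
    and x_in_T: "\<forall>i\<in>set (take (k - 1) is). x i \<in> Tset" and t_in_T: "t \<in> Tset"
    and psi_measurable: "\<psi> \<in> borel_measurable Tm"
    and psi_osc: "\<And>s s'. s \<in> Tset \<Longrightarrow> s' \<in> Tset \<Longrightarrow> \<bar>\<psi> s - \<psi> s'\<bar> \<le> c"
begin

definition "F = set (take (k - 1) is)"
definition "m = is ! (k - 1)"
definition "H = UNIV - set is"
definition "x' = x(is ! j := t)"

lemma two_le_k: "2 \<le> k"
  using j_less by simp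

lemma is_eq_snoc: "is = take (k - 1) is @ [m]"
  using take_Suc_conv_app_nth[of "k - 1" "is"] length_is two_le_k by (simp add: m_def)

lemma set_is: "set is = insert m F"
  using arg_cong[OF is_eq_snoc, of set] by (simp add: F_def)

lemma m_notin_F: "m \<notin> F"
proof -
  have "distinct (take (k - 1) is @ [m])" using distinct_is is_eq_snoc by metis
  then show ?thesis by (simp add: F_def)
qed

lemma ij_in_F: "is ! j \<in> F"
proof -
  have "take (k - 1) is ! j = is ! j" "j < length (take (k - 1) is)" using j_less length_is by simp_all
  then show ?thesis unfolding F_def by (metis nth_mem)
qed

lemma UNIV_minus_F: "UNIV - F = insert m H"
  using set_is m_notin_F by (auto simp: H_def)

lemma m_notin_H: "m \<notin> H"
  using set_is by (simp add: H_def)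

lemma x_in_T_F: "\<forall>i\<in>F. x i \<in> Tset"
  using x_in_T by (simp add: F_def)

lemma x'_in_T_F: "\<forall>i\<in>F. x' i \<in> Tset"
  using x_in_T_F t_in_T by (simp add: x'_def)

lemma c_nonneg: "0 \<le> c"
  using psi_osc[of 0 0] by (simp add: Tset_def)

definition "psi_bound = \<bar>\<psi> 0\<bar> + c"

lemma abs_psi_le: "s \<in> Tset \<Longrightarrow> \<bar>\<psi> s\<bar> \<le> psi_bound"
  using psi_osc[of s 0] by (simp add: psi_bound_def Tset_def)

definition density_slice :: "('n \<Rightarrow> real) \<Rightarrow> ('n \<Rightarrow> real) \<Rightarrow> real \<Rightarrow> real" where
  "density_slice w u s = \<rho> (merge_pt F w (u(m := s)))"

lemma measurable_add_m: "(\<lambda>(u, s). u(m := s)) \<in> measurable (torus H \<Otimes>\<^sub>M Tm) (torus (UNIV - F))"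
  unfolding torus_def UNIV_minus_F by (rule measurable_add_dim)

lemma borel_measurable_density_slice:
  "(\<lambda>(u, s). density_slice w u s) \<in> borel_measurable (torus H \<Otimes>\<^sub>M Tm)"
  using measurable_comp[OF measurable_add_m borel_measurable_density_merge_pt[of F w]]
  by (simp add: o_def density_slice_def case_prod_beta')

lemma borel_measurable_density_slice_swap:
  "(\<lambda>(s, u). density_slice w u s) \<in> borel_measurable (Tm \<Otimes>\<^sub>M torus H)"
  using measurable_comp[OF measurable_pair_swap' borel_measurable_density_slice[of w]]
  by (simp add: o_def case_prod_beta')

lemma borel_measurable_density_slice_s: "(\<lambda>s. density_slice w u s) \<in> borel_measurable Tm"
proof -
  have "(\<lambda>s. merge_pt F w (u(m := s))) \<in> borel_measurable Tm"
  proof (rule borel_measurable_vec_components)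
    fix i show "(\<lambda>s. merge_pt F w (u(m := s)) $ i) \<in> borel_measurable Tm"
      by (cases "i \<in> F"; cases "i = m") (simp_all add: merge_pt_def borel_measurable_Tm_id)
  qed
  from measurable_comp[OF this borel_measurable_density] show ?thesis
    by (simp add: density_slice_def o_def)
qed

lemma borel_measurable_density_slice_u:
  "s \<in> Tset \<Longrightarrow> (\<lambda>u. density_slice w u s) \<in> borel_measurable (torus H)"
  using measurable_comp[OF measurable_Pair2'[of s Tm "torus H"] borel_measurable_density_slice[of w]]
  by (simp add: o_def)

lemma density_slice_bounds:
  assumes "\<forall>i\<in>F. w i \<in> Tset"
  obtains lo hi where "0 < lo"
    "\<And>u s. u \<in> space (torus H) \<Longrightarrow> s \<in> Tset \<Longrightarrow> lo \<le> density_slice w u s \<and> density_slice w u s \<le> hi"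
proof -
  obtain lo hi where "0 < lo"
    and bounds: "\<And>y. y \<in> space (torus (UNIV - F)) \<Longrightarrow> lo \<le> \<rho> (merge_pt F w y) \<and> \<rho> (merge_pt F w y) \<le> hi"
    using density_merge_pt_bounds[OF assms] by blast
  have "u(m := s) \<in> space (torus (UNIV - F))" if "u \<in> space (torus H)" "s \<in> Tset" for u s
    using that m_notin_H by (auto simp: space_torus UNIV_minus_F PiE_def extensional_def Pi_def)
  then show ?thesis using \<open>0 < lo\<close> bounds by (intro that[of lo hi]) (auto simp: density_slice_def)
qed

lemma integral_density_slice_s_pos:
  assumes "\<forall>i\<in>F. w i \<in> Tset" "u \<in> space (torus H)"
  shows "(\<integral>s. density_slice w u s \<partial>Tm) > 0"
proof -
  obtain lo hi where "0 < lo"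
    "\<And>u s. u \<in> space (torus H) \<Longrightarrow> s \<in> Tset \<Longrightarrow> lo \<le> density_slice w u s \<and> density_slice w u s \<le> hi"
    using density_slice_bounds[OF assms(1)] by blast
  then show ?thesis using assms(2)
    by (intro prob_space.integral_pos_if_bounded_below[OF prob_space_Tm borel_measurable_density_slice_s])
       auto
qed

lemma integral_density_slice_u_pos:
  assumes "\<forall>i\<in>F. w i \<in> Tset" "s \<in> Tset"
  shows "(\<integral>u. density_slice w u s \<partial>torus H) > 0"
proof -
  obtain lo hi where "0 < lo"
    "\<And>u s. u \<in> space (torus H) \<Longrightarrow> s \<in> Tset \<Longrightarrow> lo \<le> density_slice w u s \<and> density_slice w u s \<le> hi"
    using density_slice_bounds[OF assms(1)] by blast
  then show ?thesis using assms(2)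
    by (intro prob_space.integral_pos_if_bounded_below[OF prob_space_torus borel_measurable_density_slice_u])
       auto
qed

lemma integral_marginal_eq_iterated:
  assumes w: "\<forall>i\<in>F. w i \<in> Tset" and f: "f \<in> borel_measurable Tm"
    and f_bounded: "\<And>s. s \<in> Tset \<Longrightarrow> \<bar>f s\<bar> \<le> B"
  shows "integral\<^sup>L (marginal m (cond_meas \<rho> F w)) f =
    (\<integral>u. (\<integral>s. density_slice w u s / normalizer F w * f s \<partial>Tm) \<partial>torus H)"
proof -
  let ?Z = "normalizer F w"
  have m: "(\<lambda>y. y m) \<in> measurable (torus (UNIV - F)) Tm"
    by (rule measurable_torus_component) (use m_notin_F in simp)
  have fm: "(\<lambda>y. f (y m)) \<in> borel_measurable (torus (UNIV - F))"
    using measurable_comp[OF m f] by (simp add: o_def)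
  have Z: "?Z > 0" by (rule normalizer_pos[OF w])
  obtain lo hi where "0 < lo"
    and bounds: "\<And>y. y \<in> space (torus (UNIV - F)) \<Longrightarrow> lo \<le> \<rho> (merge_pt F w y) \<and> \<rho> (merge_pt F w y) \<le> hi"
    using density_merge_pt_bounds[OF w] by blast
  have "integrable (torus (UNIV - F)) (\<lambda>y. \<rho> (merge_pt F w y) / ?Z * f (y m))"
  proof (rule prob_space.integrable_if_bounded[OF prob_space_torus, where B="hi / ?Z * B"])
    show "(\<lambda>y. \<rho> (merge_pt F w y) / ?Z * f (y m)) \<in> borel_measurable (torus (UNIV - F))"
      using fm by measurable
    fix y assume y: "y \<in> space (torus (UNIV - F))"
    have "y m \<in> Tset" using y m_notin_F by (auto simp: space_torus)
    have "\<bar>\<rho> (merge_pt F w y) / ?Z * f (y m)\<bar> = \<rho> (merge_pt F w y) / ?Z * \<bar>f (y m)\<bar>"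
      using Z positive[of "merge_pt F w y"] by (simp add: abs_mult)
    also have "\<dots> \<le> hi / ?Z * B"
      using bounds[OF y] f_bounded[OF \<open>y m \<in> Tset\<close>] Z positive[of "merge_pt F w y"]
      by (intro mult_mono divide_right_mono) auto
    finally show "\<bar>\<rho> (merge_pt F w y) / ?Z * f (y m)\<bar> \<le> hi / ?Z * B" .
  qed
  then have iterate: "(\<integral>y. \<rho> (merge_pt F w y) / ?Z * f (y m) \<partial>PiM (insert m H) (\<lambda>_. Tm)) =
      (\<integral>u. (\<integral>s. \<rho> (merge_pt F w (u(m := s))) / ?Z * f s \<partial>Tm) \<partial>PiM H (\<lambda>_. Tm))"
    using product_sigma_finite.product_integral_insert[OF product_sigma_finite_Tm, of H m
        "\<lambda>y. \<rho> (merge_pt F w y) / ?Z * f (y m)"] m_notin_H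
    by (simp add: torus_def UNIV_minus_F)
  have "integral\<^sup>L (marginal m (cond_meas \<rho> F w)) f = (\<integral>y. f (y m) \<partial>cond_meas \<rho> F w)"
    unfolding marginal_def using m by (intro integral_distr f) (simp cong: measurable_cong_sets)
  also have "\<dots> = (\<integral>y. \<rho> (merge_pt F w y) / ?Z * f (y m) \<partial>torus (UNIV - F))"
    by (rule integral_cond_meas[OF w fm])
  also have "\<dots> = (\<integral>u. (\<integral>s. density_slice w u s / ?Z * f s \<partial>Tm) \<partial>torus H)"
    using iterate by (simp add: torus_def UNIV_minus_F density_slice_def)
  finally show ?thesis .
qed

lemma iterated_integral_swap:
  assumes w: "\<forall>i\<in>F. w i \<in> Tset"
    and h: "(\<lambda>(u, s). h u s) \<in> borel_measurable (torus H \<Otimes>\<^sub>M Tm)"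
    and h_bounded: "\<And>u s. u \<in> space (torus H) \<Longrightarrow> s \<in> Tset \<Longrightarrow> \<bar>h u s\<bar> \<le> B"
  shows "(\<integral>u. (\<integral>s. density_slice w u s / normalizer F w * h u s \<partial>Tm) \<partial>torus H) =
         (\<integral>s. (\<integral>u. density_slice w u s / normalizer F w * h u s \<partial>torus H) \<partial>Tm)"
proof -
  let ?Z = "normalizer F w"
  obtain lo hi where lo: "0 < lo" and bounds: "\<And>u s. u \<in> space (torus H) \<Longrightarrow> s \<in> Tset \<Longrightarrow>
      lo \<le> density_slice w u s \<and> density_slice w u s \<le> hi"
    using density_slice_bounds[OF w] by blast
  have Z: "?Z > 0" by (rule normalizer_pos[OF w])
  have integrable: "integrable (torus H \<Otimes>\<^sub>M Tm) (\<lambda>(u, s). density_slice w u s / ?Z * h u s)"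
  proof (rule prob_space.integrable_if_bounded[OF prob_space_pair[OF prob_space_torus prob_space_Tm],
        where B="hi / ?Z * B"])
    show "(\<lambda>(u, s). density_slice w u s / ?Z * h u s) \<in> borel_measurable (torus H \<Otimes>\<^sub>M Tm)"
      using borel_measurable_times[OF borel_measurable_divide[OF borel_measurable_density_slice[of w]
          borel_measurable_const[of ?Z]] h]
      by (simp add: case_prod_beta')
    fix p assume "p \<in> space (torus H \<Otimes>\<^sub>M Tm)"
    then obtain u s where p: "p = (u, s)" "u \<in> space (torus H)" "s \<in> Tset"
      by (auto simp: space_pair_measure)
    have "\<bar>density_slice w u s / ?Z * h u s\<bar> = density_slice w u s / ?Z * \<bar>h u s\<bar>"
      using Z lo bounds[OF p(2,3)] by (simp add: abs_mult)
    also have "\<dots> \<le> hi / ?Z * B"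
      using lo bounds[OF p(2,3)] h_bounded[OF p(2,3)] Z by (intro mult_mono divide_right_mono) auto
    finally show "\<bar>(\<lambda>(u, s). density_slice w u s / ?Z * h u s) p\<bar> \<le> hi / ?Z * B" by (simp add: p)
  qed
  have "pair_sigma_finite (torus H) Tm"
    by (simp add: pair_sigma_finite_def prob_space_imp_sigma_finite prob_space_torus prob_space_Tm)
  from pair_sigma_finite.Fubini_integral[OF this integrable] show ?thesis by (rule sym)
qed

definition rest_pt :: "('n \<Rightarrow> real) \<Rightarrow> ('n \<Rightarrow> real) \<Rightarrow> ('n \<Rightarrow> real)" where
  "rest_pt w u = (\<lambda>i. if i \<in> F then w i else u i)"

definition psi_given_rest :: "('n \<Rightarrow> real) \<Rightarrow> ('n \<Rightarrow> real) \<Rightarrow> real" where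
  "psi_given_rest w u = integral\<^sup>L (cond_meas \<rho> (UNIV - {m}) (rest_pt w u)) (\<lambda>y. \<psi> (y m))"

definition psi_given_is :: "('n \<Rightarrow> real) \<Rightarrow> real \<Rightarrow> real" where
  "psi_given_is w s = integral\<^sup>L (cond_meas \<rho> (set is) (w(m := s))) (psi_given_rest w)"

lemma rest_pt_in_T:
  assumes "\<forall>i\<in>F. w i \<in> Tset" "u \<in> space (torus H)"
  shows "\<forall>i\<in>UNIV - {m}. rest_pt w u i \<in> Tset"
  using assms set_is by (auto simp: rest_pt_def space_torus H_def)

lemma psi_given_rest_eq:
  assumes w: "\<forall>i\<in>F. w i \<in> Tset" and u: "u \<in> space (torus H)"
  shows "psi_given_rest w u = (\<integral>s. density_slice w u s * \<psi> s \<partial>Tm) / (\<integral>s. density_slice w u s \<partial>Tm)"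
proof -
  let ?Z = "normalizer (UNIV - {m}) (rest_pt w u)"
  have Um: "UNIV - (UNIV - {m}) = {m}" by auto
  have merge: "merge_pt (UNIV - {m}) (rest_pt w u) y = merge_pt F w (u(m := y m))" for y
    using m_notin_F by (auto simp: merge_pt_def rest_pt_def vec_eq_iff)
  have "(\<lambda>y. \<psi> (y m)) \<in> borel_measurable (torus (UNIV - (UNIV - {m})))"
    unfolding Um using measurable_comp[OF measurable_torus_component[of m "{m}"] psi_measurable]
    by (simp add: o_def)
  then have "psi_given_rest w u = (\<integral>y. \<rho> (merge_pt (UNIV - {m}) (rest_pt w u) y) / ?Z * \<psi> (y m)
      \<partial>torus (UNIV - (UNIV - {m})))"
    unfolding psi_given_rest_def by (rule integral_cond_meas[OF rest_pt_in_T[OF w u]])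
  also have "\<dots> = (\<integral>y. (\<lambda>s. density_slice w u s / ?Z * \<psi> s) (y m) \<partial>PiM {m} (\<lambda>_. Tm))"
    unfolding Um torus_def merge by (simp add: density_slice_def)
  also have "\<dots> = (\<integral>s. density_slice w u s / ?Z * \<psi> s \<partial>Tm)"
    by (intro product_sigma_finite.product_integral_singleton[OF product_sigma_finite_Tm]
        borel_measurable_times borel_measurable_divide borel_measurable_const
        borel_measurable_density_slice_s psi_measurable)
  also have "?Z = (\<integral>s. density_slice w u s \<partial>Tm)"
    unfolding normalizer_def Um torus_def merge
    using product_sigma_finite.product_integral_singleton[OF product_sigma_finite_Tm
        borel_measurable_density_slice_s[of w u], where i=m]
    by (simp add: density_slice_def)
  finally show ?thesis by (simp add: field_simps)
qed

lemma psi_given_is_eq: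
  assumes w: "\<forall>i\<in>F. w i \<in> Tset" and s: "s \<in> Tset" and \<phi>: "\<phi> \<in> borel_measurable (torus H)"
  shows "integral\<^sup>L (cond_meas \<rho> (set is) (w(m := s))) \<phi> =
     (\<integral>u. density_slice w u s * \<phi> u \<partial>torus H) / (\<integral>u. density_slice w u s \<partial>torus H)"
proof -
  have ws: "\<forall>i\<in>set is. (w(m := s)) i \<in> Tset" using w s set_is by auto
  have UH: "UNIV - set is = H" by (simp add: H_def)
  have merge: "merge_pt (set is) (w(m := s)) y = merge_pt F w (y(m := s))" for y
    using m_notin_F set_is by (auto simp: merge_pt_def vec_eq_iff)
  have "integral\<^sup>L (cond_meas \<rho> (set is) (w(m := s))) \<phi> =
      (\<integral>y. \<rho> (merge_pt (set is) (w(m := s)) y) / normalizer (set is) (w(m := s)) * \<phi> y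
        \<partial>torus (UNIV - set is))"
    by (rule integral_cond_meas[OF ws]) (simp add: UH \<phi>)
  also have "\<dots> = (\<integral>u. density_slice w u s * \<phi> u \<partial>torus H) / normalizer (set is) (w(m := s))"
    by (simp add: UH merge density_slice_def field_simps)
  also have "normalizer (set is) (w(m := s)) = (\<integral>u. density_slice w u s \<partial>torus H)"
    by (simp add: normalizer_def UH merge density_slice_def)
  finally show ?thesis .
qed

lemma psi_given_rest_measurable:
  assumes w: "\<forall>i\<in>F. w i \<in> Tset"
  shows "psi_given_rest w \<in> borel_measurable (torus H)"
proof -
  have "sigma_finite_measure Tm" by (rule prob_space_imp_sigma_finite[OF prob_space_Tm])
  moreover have "(\<lambda>(u, s). density_slice w u s * \<psi> s) \<in> borel_measurable (torus H \<Otimes>\<^sub>M Tm)"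
    using borel_measurable_times[OF borel_measurable_density_slice[of w]
        measurable_comp[OF measurable_snd psi_measurable]]
    by (simp add: o_def case_prod_beta')
  ultimately have "(\<lambda>u. (\<integral>s. density_slice w u s * \<psi> s \<partial>Tm) / (\<integral>s. density_slice w u s \<partial>Tm))
      \<in> borel_measurable (torus H)"
    by (intro borel_measurable_divide sigma_finite_measure.borel_measurable_lebesgue_integral
        borel_measurable_density_slice)
  then show ?thesis by (rule measurable_cong[THEN iffD1, rotated]) (simp add: psi_given_rest_eq[OF w])
qed

lemma abs_psi_given_rest_le:
  assumes w: "\<forall>i\<in>F. w i \<in> Tset" and u: "u \<in> space (torus H)"
  shows "\<bar>psi_given_rest w u\<bar> \<le> psi_bound"
  unfolding psi_given_rest_def
proof (rule prob_space.abs_integral_le_bound[OF prob_space_cond_meas[OF rest_pt_in_T[OF w u]]])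
  have Um: "UNIV - (UNIV - {m}) = {m}" by auto
  have "(\<lambda>y. \<psi> (y m)) \<in> borel_measurable (torus {m})"
    using measurable_comp[OF measurable_torus_component[of m "{m}"] psi_measurable] by (simp add: o_def)
  then show "(\<lambda>y. \<psi> (y m)) \<in> borel_measurable (cond_meas \<rho> (UNIV - {m}) (rest_pt w u))"
    by (simp add: Um cong: measurable_cong_sets)
  fix y assume "y \<in> space (cond_meas \<rho> (UNIV - {m}) (rest_pt w u))"
  then show "\<bar>\<psi> (y m)\<bar> \<le> psi_bound" by (intro abs_psi_le) (auto simp: Um space_torus)
qed

lemma integrable_psi_given_rest:
  assumes w: "\<forall>i\<in>F. w i \<in> Tset" and "\<forall>i\<in>set is. v i \<in> Tset"
  shows "integrable (cond_meas \<rho> (set is) v) (psi_given_rest w)"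
  using psi_given_rest_measurable[OF w] abs_psi_given_rest_le[OF w]
  by (intro prob_space.integrable_if_bounded[OF prob_space_cond_meas[OF assms(2)]])
     (auto simp: H_def cong: measurable_cong_sets)

lemma psi_given_is_measurable:
  assumes w: "\<forall>i\<in>F. w i \<in> Tset"
  shows "psi_given_is w \<in> borel_measurable Tm"
proof -
  have "sigma_finite_measure (torus H)" by (rule prob_space_imp_sigma_finite[OF prob_space_torus])
  moreover have "(\<lambda>(s, u). density_slice w u s * psi_given_rest w u) \<in> borel_measurable (Tm \<Otimes>\<^sub>M torus H)"
    using borel_measurable_times[OF borel_measurable_density_slice_swap[of w]
        measurable_comp[OF measurable_snd psi_given_rest_measurable[OF w]]]
    by (simp add: o_def case_prod_beta')
  ultimately have "(\<lambda>s. (\<integral>u. density_slice w u s * psi_given_rest w u \<partial>torus H)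
      / (\<integral>u. density_slice w u s \<partial>torus H)) \<in> borel_measurable Tm"
    by (intro borel_measurable_divide sigma_finite_measure.borel_measurable_lebesgue_integral
        borel_measurable_density_slice_swap)
  then show ?thesis
    by (rule measurable_cong[THEN iffD1, rotated])
       (simp add: psi_given_is_def psi_given_is_eq[OF w _ psi_given_rest_measurable[OF w]])
qed

lemma abs_psi_given_is_le:
  assumes w: "\<forall>i\<in>F. w i \<in> Tset" and s: "s \<in> Tset"
  shows "\<bar>psi_given_is w s\<bar> \<le> psi_bound"
  unfolding psi_given_is_def
proof (rule prob_space.abs_integral_le_bound[OF prob_space_cond_meas])
  show "\<forall>i\<in>set is. (w(m := s)) i \<in> Tset" using w s set_is by auto
  show "psi_given_rest w \<in> borel_measurable (cond_meas \<rho> (set is) (w(m := s)))"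
    using psi_given_rest_measurable[OF w] by (simp add: H_def cong: measurable_cong_sets)
  fix y assume "y \<in> space (cond_meas \<rho> (set is) (w(m := s)))"
  then show "\<bar>psi_given_rest w y\<bar> \<le> psi_bound" by (intro abs_psi_given_rest_le[OF w]) (simp add: H_def)
qed

lemma inner_integral_psi_eq:
  assumes w: "\<forall>i\<in>F. w i \<in> Tset" and u: "u \<in> space (torus H)"
  shows "(\<integral>s. density_slice w u s / Z * \<psi> s \<partial>Tm) = (\<integral>s. density_slice w u s / Z * psi_given_rest w u \<partial>Tm)"
proof -
  have "(\<integral>s. density_slice w u s * \<psi> s \<partial>Tm) = psi_given_rest w u * (\<integral>s. density_slice w u s \<partial>Tm)"
    using psi_given_rest_eq[OF w u] integral_density_slice_s_pos[OF w u] by simp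
  then show ?thesis by (simp add: field_simps)
qed

lemma inner_integral_psi_given_rest_eq:
  assumes w: "\<forall>i\<in>F. w i \<in> Tset" and s: "s \<in> Tset"
  shows "(\<integral>u. density_slice w u s / Z * psi_given_rest w u \<partial>torus H) =
    (\<integral>u. density_slice w u s / Z * psi_given_is w s \<partial>torus H)"
proof -
  have "(\<integral>u. density_slice w u s * psi_given_rest w u \<partial>torus H) =
      psi_given_is w s * (\<integral>u. density_slice w u s \<partial>torus H)"
    using psi_given_is_eq[OF w s psi_given_rest_measurable[OF w]] integral_density_slice_u_pos[OF w s]
    by (simp add: psi_given_is_def)
  then show ?thesis by (simp add: field_simps)
qed

text \<open>The tower property, by swapping the integrals over \<open>s\<close> and \<open>u\<close> twice.\<close>

lemma integral_marginal_psi_eq_psi_given_is: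
  assumes w: "\<forall>i\<in>F. w i \<in> Tset"
  shows "integral\<^sup>L (marginal m (cond_meas \<rho> F w)) \<psi> =
    integral\<^sup>L (marginal m (cond_meas \<rho> F w)) (psi_given_is w)"
proof -
  let ?Z = "normalizer F w"
  have "integral\<^sup>L (marginal m (cond_meas \<rho> F w)) \<psi> =
      (\<integral>u. (\<integral>s. density_slice w u s / ?Z * \<psi> s \<partial>Tm) \<partial>torus H)"
    by (rule integral_marginal_eq_iterated[OF w psi_measurable abs_psi_le])
  also have "\<dots> = (\<integral>u. (\<integral>s. density_slice w u s / ?Z * psi_given_rest w u \<partial>Tm) \<partial>torus H)"
    by (intro Bochner_Integration.integral_cong refl inner_integral_psi_eq[OF w])
  also have "\<dots> = (\<integral>s. (\<integral>u. density_slice w u s / ?Z * psi_given_rest w u \<partial>torus H) \<partial>Tm)"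
    using measurable_comp[OF measurable_fst psi_given_rest_measurable[OF w]]
    by (intro iterated_integral_swap[OF w _ abs_psi_given_rest_le[OF w]])
       (simp add: o_def case_prod_beta')
  also have "\<dots> = (\<integral>s. (\<integral>u. density_slice w u s / ?Z * psi_given_is w s \<partial>torus H) \<partial>Tm)"
    by (intro Bochner_Integration.integral_cong refl inner_integral_psi_given_rest_eq[OF w]) simp
  also have "\<dots> = (\<integral>u. (\<integral>s. density_slice w u s / ?Z * psi_given_is w s \<partial>Tm) \<partial>torus H)"
    using measurable_comp[OF measurable_snd psi_given_is_measurable[OF w]]
    by (intro iterated_integral_swap[OF w _ abs_psi_given_is_le[OF w], symmetric])
       (simp add: o_def case_prod_beta')
  also have "\<dots> = integral\<^sup>L (marginal m (cond_meas \<rho> F w)) (psi_given_is w)"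
    by (rule integral_marginal_eq_iterated[OF w psi_given_is_measurable[OF w] abs_psi_given_is_le[OF w],
          symmetric])
  finally show ?thesis .
qed

definition "b_N1 = bk (CARD('n) - 1)"

lemma b_N1_nonneg: "0 \<le> b_N1"
  using Bk_eq_bk(2)[of "CARD('n) - 1"] two_le_k k_le_card by (simp add: b_N1_def)

lemma psi_given_rest_shift_le:
  assumes u: "u \<in> space (torus H)"
  shows "psi_given_rest x u - psi_given_rest x' u \<le> b_N1 * c"
proof -
  have shift: "(rest_pt x u)(is ! j := t) = rest_pt x' u"
    using ij_in_F by (auto simp: rest_pt_def x'_def)
  have "is ! j \<noteq> m" using ij_in_F m_notin_F by auto
  from integral_cond_all_but_one_diff_le[OF psi_measurable psi_osc rest_pt_in_T[OF x_in_T_F u] this t_in_T]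
  show ?thesis unfolding shift psi_given_rest_def b_N1_def .
qed

lemma abs_psi_given_rest_upd_le:
  assumes w: "\<forall>i\<in>F. w i \<in> Tset" and l: "l \<in> H" and u: "u \<in> space (torus H)" and s: "s \<in> Tset"
  shows "\<bar>psi_given_rest w u - psi_given_rest w (u(l := s))\<bar> \<le> b_N1 * c"
proof -
  have "l \<notin> F" "l \<noteq> m" using l set_is by (auto simp: H_def)
  have u': "u(l := s) \<in> space (torus H)" by (rule fun_upd_in_space_torus[OF u l s])
  have "u l \<in> Tset" using u l by (auto simp: space_torus)
  have "(rest_pt w u)(l := s) = rest_pt w (u(l := s))" "(rest_pt w (u(l := s)))(l := u l) = rest_pt w u"
    using \<open>l \<notin> F\<close> by (auto simp: rest_pt_def)
  then have "psi_given_rest w u - psi_given_rest w (u(l := s)) \<le> b_N1 * c"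
    "psi_given_rest w (u(l := s)) - psi_given_rest w u \<le> b_N1 * c"
    using integral_cond_all_but_one_diff_le[OF psi_measurable psi_osc rest_pt_in_T[OF w u] \<open>l \<noteq> m\<close> s]
      integral_cond_all_but_one_diff_le[OF psi_measurable psi_osc rest_pt_in_T[OF w u'] \<open>l \<noteq> m\<close> \<open>u l \<in> Tset\<close>]
    by (simp_all add: psi_given_rest_def b_N1_def)
  then show ?thesis by linarith
qed

text \<open>\<open>psi_given_rest w\<close> has oscillation at most \<open>B(N - 1) c\<close> in every free coordinate, so moving one
  coordinate of \<open>is\<close> changes its conditional expectation by at most \<open>B(k) B(N - 1) c\<close>.\<close>

lemma integral_psi_given_rest_diff_le:
  assumes w: "\<forall>i\<in>F. w i \<in> Tset" and v: "\<forall>i\<in>set is. v i \<in> Tset" and "i < k" "s \<in> Tset"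
  shows "integral\<^sup>L (cond_meas \<rho> (set is) v) (psi_given_rest w)
       - integral\<^sup>L (cond_meas \<rho> (set is) (v(is ! i := s))) (psi_given_rest w) \<le> bk k * (b_N1 * c)"
proof (rule integral_diff_le_bk_mult[OF length_is distinct_is \<open>i < k\<close> v \<open>s \<in> Tset\<close> k_le_card])
  have "UNIV - set is = H" by (simp add: H_def)
  then show "integrable (torus (UNIV - set is)) (psi_given_rest w)"
    using psi_given_rest_measurable[OF w] abs_psi_given_rest_le[OF w]
    by (intro prob_space.integrable_if_bounded[OF prob_space_torus]) auto
  show "0 \<le> b_N1 * c" using b_N1_nonneg c_nonneg by simp
  fix l y s' assume "l \<in> UNIV - set is" "y \<in> space (torus (UNIV - set is))" "s' \<in> Tset"
  then show "\<bar>psi_given_rest w y - psi_given_rest w (y(l := s'))\<bar> \<le> b_N1 * c"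
    using abs_psi_given_rest_upd_le[OF w] by (simp add: H_def)
qed

lemma psi_given_is_shift_le:
  assumes s: "s \<in> Tset"
  shows "psi_given_is x s - psi_given_is x' s \<le> b_N1 * c * (1 + bk k)"
proof -
  let ?q = "cond_meas \<rho> (set is) (x(m := s))"
  have xs: "\<forall>i\<in>set is. (x(m := s)) i \<in> Tset" using x_in_T_F s set_is by auto
  have "integral\<^sup>L ?q (psi_given_rest x) - integral\<^sup>L ?q (psi_given_rest x') \<le> b_N1 * c"
  proof (rule prob_space.integral_diff_le_if_le_add[OF prob_space_cond_meas[OF xs]])
    show "integrable ?q (psi_given_rest x)" "integrable ?q (psi_given_rest x')"
      using integrable_psi_given_rest x_in_T_F x'_in_T_F xs by auto
    fix u assume "u \<in> space ?q"
    then have "u \<in> space (torus H)" by (simp add: H_def)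
    from psi_given_rest_shift_le[OF this]
    show "psi_given_rest x u \<le> psi_given_rest x' u + b_N1 * c" by simp
  qed
  moreover have "is ! j \<noteq> m" using ij_in_F m_notin_F by auto
  then have shift: "(x(m := s))(is ! j := t) = x'(m := s)"
    unfolding x'_def by (rule fun_upd_twist[symmetric])
  have "j < k" using j_less by simp
  from integral_psi_given_rest_diff_le[OF x'_in_T_F xs this t_in_T]
  have "integral\<^sup>L ?q (psi_given_rest x') - psi_given_is x' s \<le> bk k * (b_N1 * c)"
    unfolding shift psi_given_is_def .
  ultimately show ?thesis by (simp add: psi_given_is_def algebra_simps)
qed

lemma psi_given_is_osc_le:
  assumes "s \<in> Tset" "s' \<in> Tset"
  shows "psi_given_is x s - psi_given_is x s' \<le> bk k * (b_N1 * c)"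
proof -
  have "\<forall>i\<in>set is. (x(m := s)) i \<in> Tset" using x_in_T_F assms set_is by auto
  moreover have "k - 1 < k" using two_le_k by simp
  moreover have "(x(m := s))(is ! (k - 1) := s') = x(m := s')" by (simp add: m_def)
  ultimately show ?thesis
    using integral_psi_given_rest_diff_le[OF x_in_T_F _ _ \<open>s' \<in> Tset\<close>, of "x(m := s)" "k - 1"]
    unfolding psi_given_is_def by simp
qed

lemma marginal_integral_diff_le:
  "integral\<^sup>L (marginal m (cond_meas \<rho> F x)) \<psi> - integral\<^sup>L (marginal m (cond_meas \<rho> F x')) \<psi>
     \<le> b_N1 * (1 + 2 * bk k) * c"
proof -
  have prob_space: "prob_space (marginal m (cond_meas \<rho> F w))" if "\<forall>i\<in>F. w i \<in> Tset" for w
    unfolding marginal_def using measurable_torus_component[of m "UNIV - F"] m_notin_F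
    by (intro prob_space.prob_space_distr[OF prob_space_cond_meas[OF that]])
       (simp cong: measurable_cong_sets)
  have space: "space (marginal m (cond_meas \<rho> F w)) = Tset" for w by (simp add: marginal_def)
  have measurable: "psi_given_is w \<in> borel_measurable (marginal m (cond_meas \<rho> F w'))"
    if "\<forall>i\<in>F. w i \<in> Tset" for w w'
    using psi_given_is_measurable[OF that] by (simp add: marginal_def cong: measurable_cong_sets)
  have integrable: "integrable (marginal m (cond_meas \<rho> F w')) (psi_given_is w)"
    if "\<forall>i\<in>F. w i \<in> Tset" "\<forall>i\<in>F. w' i \<in> Tset" for w w'
    using abs_psi_given_is_le[OF that(1)]
    by (intro prob_space.integrable_if_bounded[OF prob_space[OF that(2)] measurable[OF that(1)]])
       (simp add: space)
  let ?P = "marginal m (cond_meas \<rho> F x)" and ?P' = "marginal m (cond_meas \<rho> F x')"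
  have "integral\<^sup>L ?P (psi_given_is x) - integral\<^sup>L ?P' (psi_given_is x) \<le> bk k * (b_N1 * c)"
    by (rule integral_diff_le_if_oscillation_le[OF prob_space[OF x_in_T_F] prob_space[OF x'_in_T_F]])
       (use measurable[OF x_in_T_F] psi_given_is_osc_le in \<open>auto simp: space\<close>)
  moreover have "integral\<^sup>L ?P' (psi_given_is x) - integral\<^sup>L ?P' (psi_given_is x') \<le> b_N1 * c * (1 + bk k)"
    by (rule prob_space.integral_diff_le_if_le_add[OF prob_space[OF x'_in_T_F]])
       (use integrable x_in_T_F x'_in_T_F in \<open>auto simp: space dest!: psi_given_is_shift_le\<close>)
  ultimately show ?thesis
    using integral_marginal_psi_eq_psi_given_is[OF x_in_T_F] integral_marginal_psi_eq_psi_given_is[OF x'_in_T_F]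
    by (simp add: algebra_simps)
qed

end

lemma integral_marginal_not_measurable:
  "f \<notin> borel_measurable Tm \<Longrightarrow> integral\<^sup>L (marginal i M) f = 0"
  by (rule not_integrable_integral_eq) (auto simp: marginal_def cong: measurable_cong_sets)

theorem lemma5p4:
  fixes \<mu> :: "('n::finite \<Rightarrow> real) measure" and \<rho> :: "real^'n \<Rightarrow> real"
    and a b K :: real and k j :: nat and "is" :: "'n list"
    and x :: "'n \<Rightarrow> real" and t :: real and \<psi> :: "real \<Rightarrow> real"
  assumes "in_M a b (K / real CARD('n)) \<mu> \<rho>" and "prob_space \<mu>"
    and "1 \<le> k" and "k \<le> CARD('n)"
    and "length is = k" and "distinct is"
    and "j < k - 1"
    and "\<forall>i\<in>set (take (k - 1) is). x i \<in> Tset" and "t \<in> Tset"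
    and "Osc1 \<psi> < \<infinity>"
  shows "ereal (integral\<^sup>L (marginal (is ! (k - 1)) (cond_meas \<rho> (set (take (k - 1) is)) x)) \<psi>
              - integral\<^sup>L (marginal (is ! (k - 1))
                   (cond_meas \<rho> (set (take (k - 1) is)) (x(is ! j := t)))) \<psi>)
         \<le> Bk \<rho> (CARD('n) - 1) * (1 + 2 * Bk \<rho> k) * Osc1 \<psi>"
proof -
  interpret positive_density \<rho> using assms(1) by (rule in_M_positive_density)
  obtain c where c: "Osc1 \<psi> = ereal c" "0 \<le> c"
    and osc: "\<And>s s'. s \<in> Tset \<Longrightarrow> s' \<in> Tset \<Longrightarrow> \<bar>\<psi> s - \<psi> s'\<bar> \<le> c"
    using Osc1_finiteE[OF assms(10)] by blast
  have "2 \<le> k" using assms(7) by simp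
  then have B: "Bk \<rho> (CARD('n) - 1) = ereal (bk (CARD('n) - 1))" "Bk \<rho> k = ereal (bk k)"
    "0 \<le> bk (CARD('n) - 1)" "0 \<le> bk k"
    using Bk_eq_bk assms(4) by auto
  have "integral\<^sup>L (marginal (is ! (k - 1)) (cond_meas \<rho> (set (take (k - 1) is)) x)) \<psi>
      - integral\<^sup>L (marginal (is ! (k - 1)) (cond_meas \<rho> (set (take (k - 1) is)) (x(is ! j := t)))) \<psi>
      \<le> bk (CARD('n) - 1) * (1 + 2 * bk k) * c"
  proof (cases "\<psi> \<in> borel_measurable Tm")
    case True
    interpret marginal_comparison \<rho> k j "is" x t \<psi> c
      by unfold_locales (use assms True osc in auto)
    from marginal_integral_diff_le show ?thesis by (simp add: F_def m_def x'_def b_N1_def)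
  qed (use B c in \<open>simp add: integral_marginal_not_measurable\<close>)
  then show ?thesis using B c by (simp add: add.commute)
qed

end
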